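(* Let $(A,\mu)$ be an associative algebra over a field $k$, $\alpha:A\to A$ an algebra endomorphism, and $T:A\otimes A\to A\otimes A$, $\tilde T_1,\tilde T_2:A\otimes A\otimes A\to A\otimes A\otimes A$ linear maps satisfying $(\alpha\otimes\alpha)\circ T=T\circ(\alpha\otimes\alpha)$, $T\circ(\mathrm{id}_A\otimes\mu)=(\mathrm{id}_A\otimes\mu)\circ\tilde T_1\circ(T\otimes\mathrm{id}_A)$, $T\circ(\mu\otimes\mathrm{id}_A)=(\mu\otimes\mathrm{id}_A)\circ\tilde T_2\circ(\mathrm{id}_A\otimes T)$, $\tilde T_1\circ(T\otimes\mathrm{id}_A)\circ(\alpha\otimes T)=\tilde T_2\circ(\mathrm{id}_A\otimes T)\circ(T\otimes\alpha)$. Then $(A,\mu\circ T,\alpha)$ is a Hom-associative algebra.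
   Context: Algebras are not assumed unital. A Hom-associative algebra is a triple $(A,\mu,\alpha)$ with $\mu(a\otimes a')=aa'$ and $\alpha$ linear such that $\alpha(aa')=\alpha(a)\alpha(a')$ and $\alpha(a)(a'a'')=(aa')\alpha(a'')$ for all $a,a',a''\in A$. *)

theory Defs
  imports Main "HOL.Vector_Spaces" "HOL-Library.Poly_Mapping"
begin

definition assoc_algebra :: "('k::field \<Rightarrow> 'a::ab_group_add \<Rightarrow> 'a) \<Rightarrow> ('a \<Rightarrow> 'a \<Rightarrow> 'a) \<Rightarrow> bool" where
  "assoc_algebra scale mult \<longleftrightarrow>
     vector_space scale \<and>
     (\<forall>b. Vector_Spaces.linear scale scale (\<lambda>a. mult a b)) \<and>
     (\<forall>a. Vector_Spaces.linear scale scale (mult a)) \<and>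
     (\<forall>a b c. mult (mult a b) c = mult a (mult b c))"

definition algebra_endo :: "('k::field \<Rightarrow> 'a::ab_group_add \<Rightarrow> 'a) \<Rightarrow> ('a \<Rightarrow> 'a \<Rightarrow> 'a) \<Rightarrow> ('a \<Rightarrow> 'a) \<Rightarrow> bool" where
  "algebra_endo scale mult alpha \<longleftrightarrow>
     Vector_Spaces.linear scale scale alpha \<and> (\<forall>a b. alpha (mult a b) = mult (alpha a) (alpha b))"

definition hom_assoc_algebra :: "('k::field \<Rightarrow> 'a::ab_group_add \<Rightarrow> 'a) \<Rightarrow> ('a \<Rightarrow> 'a \<Rightarrow> 'a) \<Rightarrow> ('a \<Rightarrow> 'a) \<Rightarrow> bool" where
  "hom_assoc_algebra scale mu alpha \<longleftrightarrow>
     vector_space scale \<and>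
     (\<forall>b. Vector_Spaces.linear scale scale (\<lambda>a. mu a b)) \<and>
     (\<forall>a. Vector_Spaces.linear scale scale (mu a)) \<and>
     Vector_Spaces.linear scale scale alpha \<and>
     (\<forall>a a'. alpha (mu a a') = mu (alpha a) (alpha a')) \<and>
     (\<forall>a a' a''. mu (alpha a) (mu a' a'') = mu (mu a a') (alpha a''))"

text \<open>Construction: the free k-vector space on A \<times> A (finitely supported functions
  from pairs to k) modulo the subspace N2 spanned by the bilinearity relations; similarly
  for three factors.  Elements of the tensor product are represented by formal linear
  combinations; two representatives denote the same tensor iff their difference lies in N.
  A linear endomorphism of the tensor product is represented by a linear map of the free
  space preserving N (every linear map of the quotient lifts to such a map, since over a
  field the projection has a linear section).\<close>

definition pm_scale :: "'k::field \<Rightarrow> ('x \<Rightarrow>\<^sub>0 'k) \<Rightarrow> ('x \<Rightarrow>\<^sub>0 'k)" where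
  "pm_scale c p = Poly_Mapping.map (\<lambda>v. c * v) p"

definition lin_ext :: "('k::field \<Rightarrow> 'b::ab_group_add \<Rightarrow> 'b) \<Rightarrow> ('x \<Rightarrow> 'b) \<Rightarrow> ('x \<Rightarrow>\<^sub>0 'k) \<Rightarrow> 'b" where
  "lin_ext s f p = (\<Sum>x\<in>Poly_Mapping.keys p. s (Poly_Mapping.lookup p x) (f x))"

definition tens2 :: "'a \<Rightarrow> 'a \<Rightarrow> ('a \<times> 'a \<Rightarrow>\<^sub>0 'k::field)" where
  "tens2 a b = Poly_Mapping.single (a, b) 1"

definition tens3 :: "'a \<Rightarrow> 'a \<Rightarrow> 'a \<Rightarrow> ('a \<times> 'a \<times> 'a \<Rightarrow>\<^sub>0 'k::field)" where
  "tens3 a b c = Poly_Mapping.single (a, b, c) 1"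

definition rel2 :: "('k::field \<Rightarrow> 'a::ab_group_add \<Rightarrow> 'a) \<Rightarrow> ('a \<times> 'a \<Rightarrow>\<^sub>0 'k) set" where
  "rel2 scale =
     {tens2 (a + a') b - tens2 a b - tens2 a' b | a a' b. True} \<union>
     {tens2 a (b + b') - tens2 a b - tens2 a b' | a b b'. True} \<union>
     {tens2 (scale c a) b - pm_scale c (tens2 a b) | c a b. True} \<union>
     {tens2 a (scale c b) - pm_scale c (tens2 a b) | c a b. True}"

definition rel3 :: "('k::field \<Rightarrow> 'a::ab_group_add \<Rightarrow> 'a) \<Rightarrow> ('a \<times> 'a \<times> 'a \<Rightarrow>\<^sub>0 'k) set" where
  "rel3 scale =
     {tens3 (a + a') b c - tens3 a b c - tens3 a' b c | a a' b c. True} \<union>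
     {tens3 a (b + b') c - tens3 a b c - tens3 a b' c | a b b' c. True} \<union>
     {tens3 a b (c + c') - tens3 a b c - tens3 a b c' | a b c c'. True} \<union>
     {tens3 (scale r a) b c - pm_scale r (tens3 a b c) | r a b c. True} \<union>
     {tens3 a (scale r b) c - pm_scale r (tens3 a b c) | r a b c. True} \<union>
     {tens3 a b (scale r c) - pm_scale r (tens3 a b c) | r a b c. True}"

definition N2 :: "('k::field \<Rightarrow> 'a::ab_group_add \<Rightarrow> 'a) \<Rightarrow> ('a \<times> 'a \<Rightarrow>\<^sub>0 'k) set" where
  "N2 scale = module.span pm_scale (rel2 scale)"

definition N3 :: "('k::field \<Rightarrow> 'a::ab_group_add \<Rightarrow> 'a) \<Rightarrow> ('a \<times> 'a \<times> 'a \<Rightarrow>\<^sub>0 'k) set" where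
  "N3 scale = module.span pm_scale (rel3 scale)"

definition teq2 :: "('k::field \<Rightarrow> 'a::ab_group_add \<Rightarrow> 'a) \<Rightarrow> ('a \<times> 'a \<Rightarrow>\<^sub>0 'k) \<Rightarrow> ('a \<times> 'a \<Rightarrow>\<^sub>0 'k) \<Rightarrow> bool" where
  "teq2 scale p q \<longleftrightarrow> p - q \<in> N2 scale"

definition teq3 :: "('k::field \<Rightarrow> 'a::ab_group_add \<Rightarrow> 'a) \<Rightarrow> ('a \<times> 'a \<times> 'a \<Rightarrow>\<^sub>0 'k) \<Rightarrow> ('a \<times> 'a \<times> 'a \<Rightarrow>\<^sub>0 'k) \<Rightarrow> bool" where
  "teq3 scale p q \<longleftrightarrow> p - q \<in> N3 scale"

definition tensor_endo2 :: "('k::field \<Rightarrow> 'a::ab_group_add \<Rightarrow> 'a) \<Rightarrow> (('a \<times> 'a \<Rightarrow>\<^sub>0 'k) \<Rightarrow> ('a \<times> 'a \<Rightarrow>\<^sub>0 'k)) \<Rightarrow> bool" where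
  "tensor_endo2 scale T \<longleftrightarrow> Vector_Spaces.linear pm_scale pm_scale T \<and> T ` N2 scale \<subseteq> N2 scale"

definition tensor_endo3 :: "('k::field \<Rightarrow> 'a::ab_group_add \<Rightarrow> 'a) \<Rightarrow> (('a \<times> 'a \<times> 'a \<Rightarrow>\<^sub>0 'k) \<Rightarrow> ('a \<times> 'a \<times> 'a \<Rightarrow>\<^sub>0 'k)) \<Rightarrow> bool" where
  "tensor_endo3 scale T \<longleftrightarrow> Vector_Spaces.linear pm_scale pm_scale T \<and> T ` N3 scale \<subseteq> N3 scale"

definition mu2 :: "('k::field \<Rightarrow> 'a::ab_group_add \<Rightarrow> 'a) \<Rightarrow> ('a \<Rightarrow> 'a \<Rightarrow> 'a) \<Rightarrow> ('a \<times> 'a \<Rightarrow>\<^sub>0 'k) \<Rightarrow> 'a" where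
  "mu2 scale mult = lin_ext scale (\<lambda>(a, b). mult a b)"

definition otimes2 :: "('a \<Rightarrow> 'a) \<Rightarrow> ('a \<Rightarrow> 'a) \<Rightarrow> ('a \<times> 'a \<Rightarrow>\<^sub>0 'k::field) \<Rightarrow> ('a \<times> 'a \<Rightarrow>\<^sub>0 'k)" where
  "otimes2 f g = lin_ext pm_scale (\<lambda>(a, b). tens2 (f a) (g b))"

definition id_ot_mu :: "('a \<Rightarrow> 'a \<Rightarrow> 'a) \<Rightarrow> ('a \<times> 'a \<times> 'a \<Rightarrow>\<^sub>0 'k::field) \<Rightarrow> ('a \<times> 'a \<Rightarrow>\<^sub>0 'k)" where
  "id_ot_mu mult = lin_ext pm_scale (\<lambda>(a, b, c). tens2 a (mult b c))"

definition mu_ot_id :: "('a \<Rightarrow> 'a \<Rightarrow> 'a) \<Rightarrow> ('a \<times> 'a \<times> 'a \<Rightarrow>\<^sub>0 'k::field) \<Rightarrow> ('a \<times> 'a \<Rightarrow>\<^sub>0 'k)" where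
  "mu_ot_id mult = lin_ext pm_scale (\<lambda>(a, b, c). tens2 (mult a b) c)"

definition ot_right :: "('a \<times> 'a \<Rightarrow>\<^sub>0 'k::field) \<Rightarrow> 'a \<Rightarrow> ('a \<times> 'a \<times> 'a \<Rightarrow>\<^sub>0 'k)" where
  "ot_right q c = lin_ext pm_scale (\<lambda>(a, b). tens3 a b c) q"

definition ot_left :: "'a \<Rightarrow> ('a \<times> 'a \<Rightarrow>\<^sub>0 'k::field) \<Rightarrow> ('a \<times> 'a \<times> 'a \<Rightarrow>\<^sub>0 'k)" where
  "ot_left a q = lin_ext pm_scale (\<lambda>(b, c). tens3 a b c) q"

definition map_ot_T :: "('a \<Rightarrow> 'a) \<Rightarrow> (('a \<times> 'a \<Rightarrow>\<^sub>0 'k::field) \<Rightarrow> ('a \<times> 'a \<Rightarrow>\<^sub>0 'k))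
    \<Rightarrow> ('a \<times> 'a \<times> 'a \<Rightarrow>\<^sub>0 'k) \<Rightarrow> ('a \<times> 'a \<times> 'a \<Rightarrow>\<^sub>0 'k)" where
  "map_ot_T f T = lin_ext pm_scale (\<lambda>(a, b, c). ot_left (f a) (T (tens2 b c)))"

definition T_ot_map :: "(('a \<times> 'a \<Rightarrow>\<^sub>0 'k::field) \<Rightarrow> ('a \<times> 'a \<Rightarrow>\<^sub>0 'k)) \<Rightarrow> ('a \<Rightarrow> 'a)
    \<Rightarrow> ('a \<times> 'a \<times> 'a \<Rightarrow>\<^sub>0 'k) \<Rightarrow> ('a \<times> 'a \<times> 'a \<Rightarrow>\<^sub>0 'k)" where
  "T_ot_map T f = lin_ext pm_scale (\<lambda>(a, b, c). ot_right (T (tens2 a b)) (f c))"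

definition twisted_mult :: "('k::field \<Rightarrow> 'a::ab_group_add \<Rightarrow> 'a) \<Rightarrow> ('a \<Rightarrow> 'a \<Rightarrow> 'a)
    \<Rightarrow> (('a \<times> 'a \<Rightarrow>\<^sub>0 'k) \<Rightarrow> ('a \<times> 'a \<Rightarrow>\<^sub>0 'k)) \<Rightarrow> 'a \<Rightarrow> 'a \<Rightarrow> 'a" where
  "twisted_mult scale mult T a b = mu2 scale mult (T (tens2 a b))"

end

theory Submission
  imports Defs
begin

text \<open>Write \<open>m = \<mu> \<circ> T\<close>. Since \<open>T\<close> preserves the bilinearity relations and \<open>\<mu>\<close> kills them,
  \<open>m\<close> is bilinear. Multiplicativity of \<open>\<alpha>\<close> is \<open>\<alpha> \<circ> \<mu> = \<mu> \<circ> (\<alpha> \<otimes> \<alpha>)\<close> combined with the first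
  compatibility condition. For Hom-associativity, \<open>\<alpha>(a) \<otimes> m(a', a'')\<close> equals
  \<open>(id \<otimes> \<mu>)((\<alpha> \<otimes> T)(a \<otimes> a' \<otimes> a''))\<close> modulo the relations, so the second condition turns
  \<open>m(\<alpha> a, m(a', a''))\<close> into \<open>\<mu> (id \<otimes> \<mu>)\<close> applied to the left side of the fourth condition;
  associativity \<open>\<mu> (id \<otimes> \<mu>) = \<mu> (\<mu> \<otimes> id)\<close> and the third condition then lead, symmetrically,
  to \<open>m(m(a, a'), \<alpha> a'')\<close>.\<close>

lemmas linear_map_add = module_hom.add[OF linear.axioms(3)]
   and linear_map_scale = module_hom.scale[OF linear.axioms(3)]
   and linear_map_diff = module_hom.diff[OF linear.axioms(3)]
   and linear_map_zero = module_hom.zero[OF linear.axioms(3)]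

lemma linear_comp:
  "Vector_Spaces.linear s1 s2 f \<Longrightarrow> Vector_Spaces.linear s2 s3 g
    \<Longrightarrow> Vector_Spaces.linear s1 s3 (\<lambda>x. g (f x))"
  using Vector_Spaces.linear_compose[of s1 s2 f s3 g] by (simp add: o_def)

lemma linear_vanishes_on_span:
  assumes f: "Vector_Spaces.linear s1 s2 f" and vanish: "\<And>b. b \<in> B \<Longrightarrow> f b = 0"
    and x: "x \<in> module.span s1 B"
  shows "f x = 0"
proof -
  have "vector_space_pair s1 s2"
    using f by (simp add: linear_iff vector_space_pair_def)
  then show ?thesis
    using vector_space_pair.linear_eq_0_on_span[OF _ f vanish x] by blast
qed

lemma linear_eq_if_diff_in_span:
  assumes f: "Vector_Spaces.linear s1 s2 f" and vanish: "\<And>b. b \<in> B \<Longrightarrow> f b = 0"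
    and diff: "x - y \<in> module.span s1 B"
  shows "f x = f y"
  using linear_vanishes_on_span[OF f vanish diff] by (simp add: linear_map_diff[OF f])

lemma lookup_pm_scale [simp]: "Poly_Mapping.lookup (pm_scale c p) x = c * Poly_Mapping.lookup p x"
  unfolding pm_scale_def by transfer (simp add: when_def)

lemma vector_space_pm_scale: "vector_space (pm_scale :: 'k::field \<Rightarrow> ('x \<Rightarrow>\<^sub>0 'k) \<Rightarrow> _)"
  by unfold_locales (auto intro!: poly_mapping_eqI simp: lookup_add algebra_simps)

lemma module_pm_scale: "module (pm_scale :: 'k::field \<Rightarrow> ('x \<Rightarrow>\<^sub>0 'k) \<Rightarrow> _)"
  by (simp add: module_iff_vector_space vector_space_pm_scale)

lemma pm_scale_one [simp]: "pm_scale 1 p = p"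
  by (rule poly_mapping_eqI) simp

lemma single_eq_pm_scale: "Poly_Mapping.single x c = pm_scale c (Poly_Mapping.single x (1::'k::field))"
  by (rule poly_mapping_eqI) (simp add: lookup_single when_def)

lemma lin_ext_superset:
  assumes "vector_space s" and "finite S" and "Poly_Mapping.keys p \<subseteq> S"
  shows "lin_ext s f p = (\<Sum>x\<in>S. s (Poly_Mapping.lookup p x) (f x))"
proof -
  interpret vector_space s by fact
  show ?thesis
    unfolding lin_ext_def by (rule sum.mono_neutral_left) (use assms in \<open>auto simp: in_keys_iff\<close>)
qed

lemma linear_lin_ext:
  fixes s :: "'k::field \<Rightarrow> 'b::ab_group_add \<Rightarrow> 'b" and f :: "'x \<Rightarrow> 'b"
  assumes vs: "vector_space s"
  shows "Vector_Spaces.linear pm_scale s (lin_ext s f)"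
proof -
  interpret vector_space s by fact
  show ?thesis unfolding linear_iff
  proof (intro conjI allI)
    fix p q :: "'x \<Rightarrow>\<^sub>0 'k"
    let ?S = "Poly_Mapping.keys p \<union> Poly_Mapping.keys q"
    have "lin_ext s f (p + q) = (\<Sum>x\<in>?S. s (Poly_Mapping.lookup (p + q) x) (f x))"
      by (rule lin_ext_superset[OF vs]) (simp_all add: keys_add)
    also have "\<dots> = (\<Sum>x\<in>?S. s (Poly_Mapping.lookup p x) (f x)) + (\<Sum>x\<in>?S. s (Poly_Mapping.lookup q x) (f x))"
      by (simp add: lookup_add scale_left_distrib sum.distrib)
    also have "\<dots> = lin_ext s f p + lin_ext s f q"
      by (simp add: lin_ext_superset[OF vs, symmetric])
    finally show "lin_ext s f (p + q) = lin_ext s f p + lin_ext s f q" .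
  next
    fix c p
    have "lin_ext s f (pm_scale c p) = (\<Sum>x\<in>Poly_Mapping.keys p. s (Poly_Mapping.lookup (pm_scale c p) x) (f x))"
      by (rule lin_ext_superset[OF vs]) (auto simp: in_keys_iff)
    then show "lin_ext s f (pm_scale c p) = s c (lin_ext s f p)"
      by (simp add: lin_ext_def scale_sum_right)
  qed (simp_all add: vector_space_pm_scale vs)
qed

lemma lin_ext_single:
  assumes "vector_space s"
  shows "lin_ext s f (Poly_Mapping.single x c) = s c (f x)"
proof -
  interpret vector_space s by fact
  show ?thesis
    by (subst lin_ext_superset[OF assms, of "{x}"]) (auto simp: lookup_single)
qed

lemma lin_ext_pm_scale_single: "lin_ext pm_scale f (Poly_Mapping.single x c) = pm_scale c (f x)"
  by (rule lin_ext_single[OF vector_space_pm_scale])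

lemma lin_ext_pm_scale_single_1 [simp]: "lin_ext pm_scale f (Poly_Mapping.single x 1) = f x"
  by (simp add: lin_ext_pm_scale_single)

lemma poly_mapping_single_induct [case_names zero single_add]:
  assumes "P 0" and "\<And>x c p. P p \<Longrightarrow> P (Poly_Mapping.single x c + p)"
  shows "P p"
proof (induction p rule: update_induct)
  case const
  then show ?case by fact
next
  case (update p x c)
  have "Poly_Mapping.update x c p = Poly_Mapping.single x c + p"
    using update(1)
    by (intro poly_mapping_eqI) (auto simp: lookup_update lookup_add lookup_single in_keys_iff when_def)
  then show ?case
    using assms(2)[OF update(3)] by simp
qed

lemma linear_eq_on_singles:
  assumes f: "Vector_Spaces.linear pm_scale s f" and g: "Vector_Spaces.linear pm_scale s g"
    and eq: "\<And>x. f (Poly_Mapping.single x (1::'k::field)) = g (Poly_Mapping.single x 1)"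
  shows "f p = g p"
proof (induction p rule: poly_mapping_single_induct)
  case zero
  then show ?case by (simp add: linear_map_zero[OF f] linear_map_zero[OF g])
next
  case (single_add x c p)
  then show ?case
    by (simp add: single_eq_pm_scale[of x c] linear_map_add[OF f] linear_map_add[OF g]
        linear_map_scale[OF f] linear_map_scale[OF g] eq)
qed

lemma rel2_in_N2: "r \<in> rel2 scale \<Longrightarrow> r \<in> N2 scale"
  unfolding N2_def by (rule module.span_base[OF module_pm_scale])

lemma tens2_add_left_N2: "tens2 (a + a') b - tens2 a b - tens2 a' b \<in> N2 scale"
  by (rule rel2_in_N2) (unfold rel2_def, blast)

lemma tens2_add_right_N2: "tens2 a (b + b') - tens2 a b - tens2 a b' \<in> N2 scale"
  by (rule rel2_in_N2) (unfold rel2_def, blast)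

lemma tens2_scale_left_N2: "tens2 (scale c a) b - pm_scale c (tens2 a b) \<in> N2 scale"
  by (rule rel2_in_N2) (unfold rel2_def, blast)

lemma tens2_scale_right_N2: "tens2 a (scale c b) - pm_scale c (tens2 a b) \<in> N2 scale"
  by (rule rel2_in_N2) (unfold rel2_def, blast)

lemma N2_add: "p \<in> N2 scale \<Longrightarrow> q \<in> N2 scale \<Longrightarrow> p + q \<in> N2 scale"
  unfolding N2_def by (rule module.span_add[OF module_pm_scale])

lemma N2_uminus: "p \<in> N2 scale \<Longrightarrow> - p \<in> N2 scale"
  unfolding N2_def by (rule module.span_neg[OF module_pm_scale])

lemma tens2_zero_right_N2: "tens2 a 0 \<in> N2 scale"
  using N2_uminus[OF tens2_add_right_N2[of a 0 0]] by simp

lemma tens2_zero_left_N2: "tens2 0 b \<in> N2 scale"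
  using N2_uminus[OF tens2_add_left_N2[of 0 0 b]] by simp

lemma linear_tens2_if_vanishes_on_N2:
  assumes vs: "vector_space scale" and f: "Vector_Spaces.linear pm_scale s f"
    and vanish: "\<And>p. p \<in> N2 scale \<Longrightarrow> f p = 0"
  shows "Vector_Spaces.linear scale s (\<lambda>a. f (tens2 a b))"
    and "Vector_Spaces.linear scale s (\<lambda>b. f (tens2 a b))"
proof -
  have vs_s: "vector_space s"
    using f by (rule linear.axioms(2))
  have eq: "f p = f q" if "p - q \<in> N2 scale" for p q
    using linear_eq_if_diff_in_span[OF f _ that[unfolded N2_def]] vanish rel2_in_N2 by blast
  have "f (tens2 (a + a') b) = f (tens2 a b + tens2 a' b)" for a a'
    by (rule eq) (use tens2_add_left_N2 in \<open>simp add: diff_diff_eq\<close>)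
  moreover have "f (tens2 (scale c a) b) = f (pm_scale c (tens2 a b))" for c a
    by (rule eq) (rule tens2_scale_left_N2)
  ultimately show "Vector_Spaces.linear scale s (\<lambda>a. f (tens2 a b))"
    unfolding linear_iff by (simp add: vs vs_s linear_map_add[OF f] linear_map_scale[OF f])
  have "f (tens2 a (b + b')) = f (tens2 a b + tens2 a b')" for b b'
    by (rule eq) (use tens2_add_right_N2 in \<open>simp add: diff_diff_eq\<close>)
  moreover have "f (tens2 a (scale c b)) = f (pm_scale c (tens2 a b))" for c b
    by (rule eq) (rule tens2_scale_right_N2)
  ultimately show "Vector_Spaces.linear scale s (\<lambda>b. f (tens2 a b))"
    unfolding linear_iff by (simp add: vs vs_s linear_map_add[OF f] linear_map_scale[OF f])
qed

lemma otimes2_tens2 [simp]: "otimes2 f g (tens2 a b) = tens2 (f a) (g b)"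
  unfolding otimes2_def tens2_def by simp

lemma id_ot_mu_tens3 [simp]: "id_ot_mu mult (tens3 a b c) = tens2 a (mult b c)"
  unfolding id_ot_mu_def tens3_def by simp

lemma mu_ot_id_tens3 [simp]: "mu_ot_id mult (tens3 a b c) = tens2 (mult a b) c"
  unfolding mu_ot_id_def tens3_def by simp

lemma map_ot_T_tens3 [simp]: "map_ot_T f T (tens3 a b c) = ot_left (f a) (T (tens2 b c))"
  unfolding map_ot_T_def tens3_def by simp

lemma T_ot_map_tens3 [simp]: "T_ot_map T f (tens3 a b c) = ot_right (T (tens2 a b)) (f c)"
  unfolding T_ot_map_def tens3_def by simp

lemma ot_left_single: "ot_left a (Poly_Mapping.single (b, c) r) = pm_scale r (tens3 a b c)"
  unfolding ot_left_def by (simp add: lin_ext_pm_scale_single)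

lemma ot_right_single: "ot_right (Poly_Mapping.single (a, b) r) c = pm_scale r (tens3 a b c)"
  unfolding ot_right_def by (simp add: lin_ext_pm_scale_single)

lemma linear_otimes2: "Vector_Spaces.linear pm_scale pm_scale (otimes2 f g)"
  unfolding otimes2_def by (rule linear_lin_ext[OF vector_space_pm_scale])

lemma linear_id_ot_mu: "Vector_Spaces.linear pm_scale pm_scale (id_ot_mu mult)"
  unfolding id_ot_mu_def by (rule linear_lin_ext[OF vector_space_pm_scale])

lemma linear_mu_ot_id: "Vector_Spaces.linear pm_scale pm_scale (mu_ot_id mult)"
  unfolding mu_ot_id_def by (rule linear_lin_ext[OF vector_space_pm_scale])

lemma linear_ot_left: "Vector_Spaces.linear pm_scale pm_scale (ot_left a)"
  unfolding ot_left_def by (rule linear_lin_ext[OF vector_space_pm_scale])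

lemma linear_ot_right: "Vector_Spaces.linear pm_scale pm_scale (\<lambda>q. ot_right q c)"
  unfolding ot_right_def by (rule linear_lin_ext[OF vector_space_pm_scale])

locale bilinear_mult = vector_space scale
  for scale :: "'k::field \<Rightarrow> 'a::ab_group_add \<Rightarrow> 'a" +
  fixes mult :: "'a \<Rightarrow> 'a \<Rightarrow> 'a"
  assumes linear_mult_left: "Vector_Spaces.linear scale scale (\<lambda>a. mult a b)"
    and linear_mult_right: "Vector_Spaces.linear scale scale (mult a)"
begin

lemma mult_add_left: "mult (a + a') b = mult a b + mult a' b"
  using linear_map_add[OF linear_mult_left] by simp

lemma mult_add_right: "mult a (b + b') = mult a b + mult a b'"
  using linear_map_add[OF linear_mult_right] by simp

lemma mult_scale_left: "mult (scale c a) b = scale c (mult a b)"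
  using linear_map_scale[OF linear_mult_left] by simp

lemma mult_scale_right: "mult a (scale c b) = scale c (mult a b)"
  using linear_map_scale[OF linear_mult_right] by simp

lemmas mult_distribs = mult_add_left mult_add_right mult_scale_left mult_scale_right

lemma linear_mu2: "Vector_Spaces.linear pm_scale scale (mu2 scale mult)"
  unfolding mu2_def by (rule linear_lin_ext[OF vector_space_axioms])

lemma mu2_single: "mu2 scale mult (Poly_Mapping.single (a, b) c) = scale c (mult a b)"
  unfolding mu2_def by (simp add: lin_ext_single[OF vector_space_axioms])

lemma mu2_tens2 [simp]: "mu2 scale mult (tens2 a b) = mult a b"
  unfolding tens2_def by (simp add: mu2_single)

lemma mu2_vanishes_on_N2:
  assumes "p \<in> N2 scale"
  shows "mu2 scale mult p = 0"
proof (rule linear_vanishes_on_span[OF linear_mu2 _ assms[unfolded N2_def]])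
  fix r
  assume "r \<in> rel2 scale"
  then show "mu2 scale mult r = 0"
    unfolding rel2_def
    by (auto simp: linear_map_diff[OF linear_mu2] linear_map_scale[OF linear_mu2] mult_distribs)
qed

lemma mu2_eq_if_diff_in_N2: "p - q \<in> N2 scale \<Longrightarrow> mu2 scale mult p = mu2 scale mult q"
  using mu2_vanishes_on_N2[of "p - q"] by (simp add: linear_map_diff[OF linear_mu2])

lemma mu2_otimes2:
  assumes "algebra_endo scale mult alpha"
  shows "mu2 scale mult (otimes2 alpha alpha p) = alpha (mu2 scale mult p)"
proof -
  have alpha: "Vector_Spaces.linear scale scale alpha" "\<And>a b. alpha (mult a b) = mult (alpha a) (alpha b)"
    using assms by (simp_all add: algebra_endo_def)
  show ?thesis
  proof (rule linear_eq_on_singles[OF linear_comp[OF linear_otimes2 linear_mu2]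
        linear_comp[OF linear_mu2 alpha(1)]])
    fix x :: "'a \<times> 'a"
    show "mu2 scale mult (otimes2 alpha alpha (Poly_Mapping.single x 1))
        = alpha (mu2 scale mult (Poly_Mapping.single x 1))"
      by (cases x) (simp add: tens2_def[symmetric] alpha(2))
  qed
qed

lemma mu2_id_ot_mu_vanishes_on_N3:
  assumes "p \<in> N3 scale"
  shows "mu2 scale mult (id_ot_mu mult p) = 0"
proof (rule linear_vanishes_on_span[OF linear_comp[OF linear_id_ot_mu linear_mu2] _ assms[unfolded N3_def]])
  fix r
  assume "r \<in> rel3 scale"
  then show "mu2 scale mult (id_ot_mu mult r) = 0"
    unfolding rel3_def
    by (auto simp: linear_map_diff[OF linear_comp[OF linear_id_ot_mu linear_mu2]]
        linear_map_scale[OF linear_comp[OF linear_id_ot_mu linear_mu2]] mult_distribs)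
qed

lemma mu2_id_ot_mu_eq_if_diff_in_N3:
  "p - q \<in> N3 scale \<Longrightarrow> mu2 scale mult (id_ot_mu mult p) = mu2 scale mult (id_ot_mu mult q)"
  using mu2_id_ot_mu_vanishes_on_N3[of "p - q"]
  by (simp add: linear_map_diff[OF linear_comp[OF linear_id_ot_mu linear_mu2]])

lemma mu2_id_ot_mu_eq_mu_ot_id:
  assumes assoc: "\<And>a b c. mult (mult a b) c = mult a (mult b c)"
  shows "mu2 scale mult (id_ot_mu mult p) = mu2 scale mult (mu_ot_id mult p)"
proof (rule linear_eq_on_singles[OF linear_comp[OF linear_id_ot_mu linear_mu2]
      linear_comp[OF linear_mu_ot_id linear_mu2]])
  fix x :: "'a \<times> 'a \<times> 'a"
  show "mu2 scale mult (id_ot_mu mult (Poly_Mapping.single x 1))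
      = mu2 scale mult (mu_ot_id mult (Poly_Mapping.single x 1))"
    by (cases x) (simp add: tens3_def[symmetric] assoc)
qed

lemma tens2_mu2_equiv_id_ot_mu:
  "tens2 a (mu2 scale mult q) - id_ot_mu mult (ot_left a q) \<in> N2 scale"
proof (induction q rule: poly_mapping_single_induct)
  case zero
  then show ?case
    by (simp add: linear_map_zero[OF linear_mu2] linear_map_zero[OF linear_ot_left]
        linear_map_zero[OF linear_id_ot_mu] tens2_zero_right_N2)
next
  case (single_add x c q)
  obtain u v where x: "x = (u, v)" by (cases x)
  let ?w = "mult u v"
  have "tens2 a (mu2 scale mult (Poly_Mapping.single x c + q))
        - id_ot_mu mult (ot_left a (Poly_Mapping.single x c + q))
      = tens2 a (scale c ?w + mu2 scale mult q)
        - (pm_scale c (tens2 a ?w) + id_ot_mu mult (ot_left a q))"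
    by (simp add: x linear_map_add[OF linear_mu2] mu2_single linear_map_add[OF linear_ot_left]
        linear_map_add[OF linear_id_ot_mu] ot_left_single linear_map_scale[OF linear_id_ot_mu])
  also have "\<dots> = (tens2 a (scale c ?w + mu2 scale mult q) - tens2 a (scale c ?w) - tens2 a (mu2 scale mult q))
      + (tens2 a (scale c ?w) - pm_scale c (tens2 a ?w))
      + (tens2 a (mu2 scale mult q) - id_ot_mu mult (ot_left a q))"
    by (simp add: algebra_simps)
  also have "\<dots> \<in> N2 scale"
    by (intro N2_add tens2_add_right_N2 tens2_scale_right_N2 single_add)
  finally show ?case .
qed

lemma mu_ot_id_equiv_tens2_mu2:
  "mu_ot_id mult (ot_right q c) - tens2 (mu2 scale mult q) c \<in> N2 scale"
proof (induction q rule: poly_mapping_single_induct)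
  case zero
  then show ?case
    by (simp add: linear_map_zero[OF linear_mu2] linear_map_zero[OF linear_ot_right]
        linear_map_zero[OF linear_mu_ot_id] tens2_zero_left_N2 N2_uminus)
next
  case (single_add x r q)
  obtain u v where x: "x = (u, v)" by (cases x)
  let ?w = "mult u v"
  have "mu_ot_id mult (ot_right (Poly_Mapping.single x r + q) c)
        - tens2 (mu2 scale mult (Poly_Mapping.single x r + q)) c
      = (pm_scale r (tens2 ?w c) + mu_ot_id mult (ot_right q c))
        - tens2 (scale r ?w + mu2 scale mult q) c"
    by (simp add: x linear_map_add[OF linear_mu2] mu2_single linear_map_add[OF linear_ot_right]
        linear_map_add[OF linear_mu_ot_id] ot_right_single linear_map_scale[OF linear_mu_ot_id])
  also have "\<dots> = - (tens2 (scale r ?w + mu2 scale mult q) c - tens2 (scale r ?w) c - tens2 (mu2 scale mult q) c)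
      + - (tens2 (scale r ?w) c - pm_scale r (tens2 ?w c))
      + (mu_ot_id mult (ot_right q c) - tens2 (mu2 scale mult q) c)"
    by (simp add: algebra_simps)
  also have "\<dots> \<in> N2 scale"
    by (intro N2_add N2_uminus tens2_add_left_N2 tens2_scale_left_N2 single_add)
  finally show ?case .
qed

context
  fixes T :: "('a \<times> 'a \<Rightarrow>\<^sub>0 'k) \<Rightarrow> ('a \<times> 'a \<Rightarrow>\<^sub>0 'k)"
  assumes T: "tensor_endo2 scale T"
begin

lemma mu2_T_vanishes_on_N2: "p \<in> N2 scale \<Longrightarrow> mu2 scale mult (T p) = 0"
  using T by (intro mu2_vanishes_on_N2) (auto simp: tensor_endo2_def)

lemma mu2_T_eq_if_diff_in_N2:
  assumes "p - q \<in> N2 scale"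
  shows "mu2 scale mult (T p) = mu2 scale mult (T q)"
proof -
  have "Vector_Spaces.linear pm_scale pm_scale T"
    using T by (simp add: tensor_endo2_def)
  then show ?thesis
    using mu2_T_vanishes_on_N2[OF assms] by (simp add: linear_map_diff linear_map_diff[OF linear_mu2])
qed

lemma linear_twisted_mult:
  shows linear_twisted_mult_left: "Vector_Spaces.linear scale scale (\<lambda>a. twisted_mult scale mult T a b)"
    and linear_twisted_mult_right: "Vector_Spaces.linear scale scale (twisted_mult scale mult T a)"
proof -
  have "Vector_Spaces.linear pm_scale scale (\<lambda>p. mu2 scale mult (T p))"
    using T by (intro linear_comp[OF _ linear_mu2]) (simp add: tensor_endo2_def)
  from linear_tens2_if_vanishes_on_N2[OF vector_space_axioms this mu2_T_vanishes_on_N2]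
  show "Vector_Spaces.linear scale scale (\<lambda>a. twisted_mult scale mult T a b)"
    and "Vector_Spaces.linear scale scale (twisted_mult scale mult T a)"
    by (simp_all add: twisted_mult_def[abs_def])
qed

lemma twisted_mult_alpha:
  assumes endo: "algebra_endo scale mult alpha"
    and T_alpha: "\<And>p. teq2 scale (otimes2 alpha alpha (T p)) (T (otimes2 alpha alpha p))"
  shows "alpha (twisted_mult scale mult T a a') = twisted_mult scale mult T (alpha a) (alpha a')"
proof -
  have "alpha (mu2 scale mult (T (tens2 a a'))) = mu2 scale mult (otimes2 alpha alpha (T (tens2 a a')))"
    by (rule mu2_otimes2[OF endo, symmetric])
  also have "\<dots> = mu2 scale mult (T (tens2 (alpha a) (alpha a')))"
    using T_alpha[of "tens2 a a'"] by (intro mu2_eq_if_diff_in_N2) (simp add: teq2_def)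
  finally show ?thesis
    by (simp add: twisted_mult_def)
qed

lemma twisted_mult_hom_assoc:
  assumes assoc: "\<And>a b c. mult (mult a b) c = mult a (mult b c)"
    and T_id_ot_mu: "\<And>p. teq2 scale (T (id_ot_mu mult p)) (id_ot_mu mult (T1 (T_ot_map T id p)))"
    and T_mu_ot_id: "\<And>p. teq2 scale (T (mu_ot_id mult p)) (mu_ot_id mult (T2 (map_ot_T id T p)))"
    and braid: "\<And>p. teq3 scale (T1 (T_ot_map T id (map_ot_T alpha T p)))
                               (T2 (map_ot_T id T (T_ot_map T alpha p)))"
  shows "twisted_mult scale mult T (alpha a) (twisted_mult scale mult T a' a'')
       = twisted_mult scale mult T (twisted_mult scale mult T a a') (alpha a'')"
proof -
  let ?mu = "mu2 scale mult"
  define p :: "'a \<times> 'a \<times> 'a \<Rightarrow>\<^sub>0 'k" where "p = tens3 a a' a''"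
  have "?mu (T (tens2 (alpha a) (?mu (T (tens2 a' a'')))))
      = ?mu (T (id_ot_mu mult (map_ot_T alpha T p)))"
    unfolding p_def map_ot_T_tens3
    by (rule mu2_T_eq_if_diff_in_N2) (rule tens2_mu2_equiv_id_ot_mu)
  also have "\<dots> = ?mu (id_ot_mu mult (T1 (T_ot_map T id (map_ot_T alpha T p))))"
    by (rule mu2_eq_if_diff_in_N2) (use T_id_ot_mu in \<open>simp add: teq2_def\<close>)
  also have "\<dots> = ?mu (id_ot_mu mult (T2 (map_ot_T id T (T_ot_map T alpha p))))"
    by (rule mu2_id_ot_mu_eq_if_diff_in_N3) (use braid in \<open>simp add: teq3_def\<close>)
  also have "\<dots> = ?mu (mu_ot_id mult (T2 (map_ot_T id T (T_ot_map T alpha p))))"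
    by (rule mu2_id_ot_mu_eq_mu_ot_id[OF assoc])
  also have "\<dots> = ?mu (T (mu_ot_id mult (T_ot_map T alpha p)))"
    by (rule mu2_eq_if_diff_in_N2[symmetric]) (use T_mu_ot_id in \<open>simp add: teq2_def\<close>)
  also have "\<dots> = ?mu (T (tens2 (?mu (T (tens2 a a'))) (alpha a'')))"
    unfolding p_def T_ot_map_tens3
    by (rule mu2_T_eq_if_diff_in_N2) (rule mu_ot_id_equiv_tens2_mu2)
  finally show ?thesis
    by (simp add: twisted_mult_def)
qed

end

end

theorem theorem4p1:
  fixes scale :: "'k::field \<Rightarrow> 'a::ab_group_add \<Rightarrow> 'a"
    and mult :: "'a \<Rightarrow> 'a \<Rightarrow> 'a"
    and alpha :: "'a \<Rightarrow> 'a"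
    and T :: "('a \<times> 'a \<Rightarrow>\<^sub>0 'k) \<Rightarrow> ('a \<times> 'a \<Rightarrow>\<^sub>0 'k)"
    and T1 T2 :: "('a \<times> 'a \<times> 'a \<Rightarrow>\<^sub>0 'k) \<Rightarrow> ('a \<times> 'a \<times> 'a \<Rightarrow>\<^sub>0 'k)"
  assumes alg: "assoc_algebra scale mult"
    and endo: "algebra_endo scale mult alpha"
    and T_lin: "tensor_endo2 scale T"
    and T1_lin: "tensor_endo3 scale T1"
    and T2_lin: "tensor_endo3 scale T2"
    and h1: "\<forall>p. teq2 scale (otimes2 alpha alpha (T p)) (T (otimes2 alpha alpha p))"
    and h2: "\<forall>p. teq2 scale (T (id_ot_mu mult p)) (id_ot_mu mult (T1 (T_ot_map T id p)))"
    and h3: "\<forall>p. teq2 scale (T (mu_ot_id mult p)) (mu_ot_id mult (T2 (map_ot_T id T p)))"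
    and h4: "\<forall>p. teq3 scale (T1 (T_ot_map T id (map_ot_T alpha T p)))
                            (T2 (map_ot_T id T (T_ot_map T alpha p)))"
  shows "hom_assoc_algebra scale (twisted_mult scale mult T) alpha"
proof -
  interpret bilinear_mult scale mult
    using alg by (simp add: assoc_algebra_def bilinear_mult_def bilinear_mult_axioms_def)
  have assoc: "\<And>a b c. mult (mult a b) c = mult a (mult b c)"
    using alg by (simp add: assoc_algebra_def)
  have "Vector_Spaces.linear scale scale alpha"
    using endo by (simp add: algebra_endo_def)
  then show ?thesis
    unfolding hom_assoc_algebra_def
    using vector_space_axioms linear_twisted_mult_left[OF T_lin] linear_twisted_mult_right[OF T_lin]
      twisted_mult_alpha[OF T_lin endo h1[rule_format]]
      twisted_mult_hom_assoc[OF T_lin assoc h2[rule_format] h3[rule_format] h4[rule_format]]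
    by blast
qed

end
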